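(* Let $\mathbb{X}$ be a set, $E\subset\mathbb{R}^{\mathbb{X}}$ a real vector subspace, $C=(E\cap[0,\infty)^{\mathbb{X}})\setminus\{0\}$, and $\Pi:E\to E/\mathcal{R}$ the canonical projection, where $f\mathcal{R}g$ iff $f=bg$ for some $b>0$. Let $\bar f\neq\bar g\in\Pi(C)$. Then: (1) there exist $f\in\bar f$, $g\in\bar g$ such that the intersection of the affine line through $f$ and $g$ with $C$ is a line segment $[u,v]$ with $u\neq v$. Fix such $f,g,u,v$. Then: (2) for any $h\in C$ lying in the vector plane spanned by $u$ and $v$ (equivalently by $f$ and $g$), the segment $[u,v]$ meets the vector line $\mathbb{R}h$ in a single point, which belongs to $C$; (3) for any $h\neq0$ in the vector plane spanned by $u,v$, writing $h=h_1u+h_2v$, one has $h\in C$ if and only if $h_1\ge0$ and $h_2\ge0$.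
   Context: Elements of $\Pi(C)$ are open half-lines $\{bf: b>0\}$, $f\in C$. *)

theory Defs
  imports "HOL-Analysis.Analysis"
begin

text \<open>Real-valued functions on a set X (modelled as a type 'x), with pointwise operations.\<close>

definition scal :: "real \<Rightarrow> ('x \<Rightarrow> real) \<Rightarrow> ('x \<Rightarrow> real)" where
  "scal c f = (\<lambda>x. c * f x)"

definition lin_comb :: "real \<Rightarrow> ('x \<Rightarrow> real) \<Rightarrow> real \<Rightarrow> ('x \<Rightarrow> real) \<Rightarrow> ('x \<Rightarrow> real)" where
  "lin_comb a f b g = (\<lambda>x. a * f x + b * g x)"

definition is_subspace :: "('x \<Rightarrow> real) set \<Rightarrow> bool" where
  "is_subspace E \<longleftrightarrow> (\<lambda>x. 0) \<in> E \<and> (\<forall>f\<in>E. \<forall>g\<in>E. (\<lambda>x. f x + g x) \<in> E)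
      \<and> (\<forall>c. \<forall>f\<in>E. scal c f \<in> E)"

definition cone_C :: "('x \<Rightarrow> real) set \<Rightarrow> ('x \<Rightarrow> real) set" where
  "cone_C E = {f \<in> E. \<forall>x. 0 \<le> f x} - {\<lambda>x. 0}"

text \<open>Open half-line {b f : b > 0}, i.e. the equivalence class of f under R.\<close>
definition halfline :: "('x \<Rightarrow> real) \<Rightarrow> ('x \<Rightarrow> real) set" where
  "halfline f = {scal b f | b. b > 0}"

definition Pi_C :: "('x \<Rightarrow> real) set \<Rightarrow> ('x \<Rightarrow> real) set set" where
  "Pi_C E = halfline ` cone_C E"

definition aff_line :: "('x \<Rightarrow> real) \<Rightarrow> ('x \<Rightarrow> real) \<Rightarrow> ('x \<Rightarrow> real) set" where
  "aff_line f g = {lin_comb (1 - t) f t g | t. True}"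

definition seg :: "('x \<Rightarrow> real) \<Rightarrow> ('x \<Rightarrow> real) \<Rightarrow> ('x \<Rightarrow> real) set" where
  "seg u v = {lin_comb (1 - t) u t v | t. 0 \<le> t \<and> t \<le> 1}"

definition vplane :: "('x \<Rightarrow> real) \<Rightarrow> ('x \<Rightarrow> real) \<Rightarrow> ('x \<Rightarrow> real) set" where
  "vplane u v = {lin_comb a u b v | a b. True}"

definition vline :: "('x \<Rightarrow> real) \<Rightarrow> ('x \<Rightarrow> real) set" where
  "vline h = {scal c h | c. True}"

end

theory Submission
  imports Defs "HOL-Library.Function_Algebras"
begin

(*
  Part (1): parametrise the line through f and g as t \<mapsto> (1 - t) f + t g. The parameters at which
  it is nonnegative form an intersection of closed half-lines of \<real>. After rescaling g inside its
  half-line so that g - f changes sign (possible because f and g are not positively proportional),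
  this intersection is bounded, hence a compact interval [t1, t2] containing [0, 1], and the line
  misses 0; its image is the segment [u, v].

  Parts (2) and (3) only use that C is a convex cone not containing 0. If a u + b v \<in> C with
  a + b > 0, rescaling it onto the line puts it in C \<inter> line = [u, v], forcing a, b \<ge> 0; adding a
  large multiple of u or v reduces the general case to this one. In particular u and v are linearly
  independent, so every ray of C in their plane crosses [u, v] exactly once.
*)

text \<open>With the pointwise real vector structure on functions, the notions of Defs become the library's
  linear combinations, segments, spans and affine hulls.\<close>

instantiation "fun" :: (type, real_vector) real_vector
begin

definition scaleR_fun :: "real \<Rightarrow> ('a \<Rightarrow> 'b) \<Rightarrow> 'a \<Rightarrow> 'b" where
  "scaleR c f = (\<lambda>x. c *\<^sub>R f x)"

instance
  by standard (simp_all add: scaleR_fun_def fun_eq_iff scaleR_add_right scaleR_add_left)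

end

lemma scaleR_fun_apply [simp]: "(c *\<^sub>R f) x = c *\<^sub>R f x"
  by (simp add: scaleR_fun_def)

lemma affine_path_image_interval:
  fixes f g :: "'a::real_vector"
  assumes "a \<le> b"
  shows "(\<lambda>t. (1 - t) *\<^sub>R f + t *\<^sub>R g) ` {a..b}
    = closed_segment ((1 - a) *\<^sub>R f + a *\<^sub>R g) ((1 - b) *\<^sub>R f + b *\<^sub>R g)"
proof -
  have path: "(1 - t) *\<^sub>R f + t *\<^sub>R g = f + t *\<^sub>R (g - f)" for t
    by (simp add: algebra_simps)
  have lin: "linear (\<lambda>t::real. t *\<^sub>R (g - f))"
    by (simp add: bounded_linear.linear bounded_linear_scaleR_left)
  then have "closed_segment (a *\<^sub>R (g - f)) (b *\<^sub>R (g - f)) = (\<lambda>t. t *\<^sub>R (g - f)) ` {a..b}"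
    using closed_segment_linear_image [OF lin, of a b] assms by (simp add: closed_segment_eq_real_ivl)
  then have "closed_segment (f + a *\<^sub>R (g - f)) (f + b *\<^sub>R (g - f))
      = (\<lambda>x. f + x) ` (\<lambda>t. t *\<^sub>R (g - f)) ` {a..b}"
    by (simp add: closed_segment_translation)
  then show ?thesis
    unfolding path image_comp comp_def by simp
qed

definition blunt_convex_cone :: "'a::real_vector set \<Rightarrow> bool" where
  "blunt_convex_cone C \<longleftrightarrow>
     0 \<notin> C \<and> (\<forall>x\<in>C. \<forall>y\<in>C. x + y \<in> C) \<and> (\<forall>c>0. \<forall>x\<in>C. c *\<^sub>R x \<in> C)"

lemma blunt_convex_cone_nonneg_combination:
  assumes C: "blunt_convex_cone C" and "x \<in> C" "y \<in> C" "0 \<le> a" "0 \<le> b"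
    and nz: "a *\<^sub>R x + b *\<^sub>R y \<noteq> 0"
  shows "a *\<^sub>R x + b *\<^sub>R y \<in> C"
proof -
  have scale: "c *\<^sub>R z \<in> C" if "c > 0" "z \<in> C" for c z
    using C that unfolding blunt_convex_cone_def by blast
  consider "a = 0" | "b = 0" | "a > 0" "b > 0"
    using assms by linarith
  then show ?thesis
  proof cases
    case 1
    then show ?thesis using nz scale \<open>y \<in> C\<close> \<open>0 \<le> b\<close> by force
  next
    case 2
    then show ?thesis using nz scale \<open>x \<in> C\<close> \<open>0 \<le> a\<close> by force
  next
    case 3
    then show ?thesis using C scale \<open>x \<in> C\<close> \<open>y \<in> C\<close> unfolding blunt_convex_cone_def by blast
  qed
qed

locale cone_section =
  fixes C L :: "'a::real_vector set" and u v :: 'a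
  assumes cone: "blunt_convex_cone C"
    and affine_line: "affine L"
    and line_inter_cone: "L \<inter> C = closed_segment u v"
    and endpoints_distinct: "u \<noteq> v"
begin

lemma endpoints_in_cone: "u \<in> C" "v \<in> C"
  using line_inter_cone by auto

lemma endpoints_nonzero: "u \<noteq> 0" "v \<noteq> 0"
  using endpoints_in_cone cone unfolding blunt_convex_cone_def by auto

lemma affine_combination_in_line: "(1 - t) *\<^sub>R u + t *\<^sub>R v \<in> L"
proof -
  have "u \<in> L" "v \<in> L"
    using line_inter_cone by auto
  then show ?thesis
    using affine_line unfolding affine_def by simp
qed

lemma affine_combination_eq_iff:
  "(1 - t) *\<^sub>R u + t *\<^sub>R v = (1 - s) *\<^sub>R u + s *\<^sub>R v \<longleftrightarrow> t = s"
proof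
  assume "(1 - t) *\<^sub>R u + t *\<^sub>R v = (1 - s) *\<^sub>R u + s *\<^sub>R v"
  then have "(t - s) *\<^sub>R (v - u) = 0"
    by (simp add: algebra_simps)
  then show "t = s"
    using endpoints_distinct by simp
qed simp

lemma affine_combination_in_cone_imp_01:
  assumes "(1 - t) *\<^sub>R u + t *\<^sub>R v \<in> C"
  shows "0 \<le> t \<and> t \<le> 1"
proof -
  have "(1 - t) *\<^sub>R u + t *\<^sub>R v \<in> closed_segment u v"
    using assms affine_combination_in_line line_inter_cone by blast
  then show ?thesis
    unfolding closed_segment_def using affine_combination_eq_iff by auto
qed

lemma coefficients_nonneg_of_sum_pos:
  assumes h: "a *\<^sub>R u + b *\<^sub>R v \<in> C" and pos: "0 < a + b"
  shows "0 \<le> a \<and> 0 \<le> b"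
proof -
  define t where "t = b / (a + b)"
  have "1 - t = a / (a + b)"
    using pos by (simp add: t_def field_simps)
  then have "(1 - t) *\<^sub>R u + t *\<^sub>R v = (1 / (a + b)) *\<^sub>R (a *\<^sub>R u + b *\<^sub>R v)"
    by (simp add: t_def scaleR_add_right)
  also have "\<dots> \<in> C"
    using cone h pos unfolding blunt_convex_cone_def by simp
  finally have "0 \<le> t \<and> t \<le> 1"
    by (rule affine_combination_in_cone_imp_01)
  then show ?thesis
    using pos by (simp add: t_def field_simps)
qed

lemma plane_mem_cone_iff:
  assumes nz: "a *\<^sub>R u + b *\<^sub>R v \<noteq> 0"
  shows "a *\<^sub>R u + b *\<^sub>R v \<in> C \<longleftrightarrow> 0 \<le> a \<and> 0 \<le> b"
proof
  assume h: "a *\<^sub>R u + b *\<^sub>R v \<in> C"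
  define c where "c = \<bar>a\<bar> + \<bar>b\<bar> + 1"
  have add: "x + y \<in> C" if "x \<in> C" "y \<in> C" for x y
    using cone that unfolding blunt_convex_cone_def by blast
  have scale: "c *\<^sub>R x \<in> C" if "x \<in> C" for x
    using cone that unfolding blunt_convex_cone_def c_def by simp
  \<comment> \<open>Adding a large multiple of one endpoint makes the coefficient sum positive.\<close>
  have "a *\<^sub>R u + (b + c) *\<^sub>R v \<in> C" "(a + c) *\<^sub>R u + b *\<^sub>R v \<in> C"
    using add [OF h scale [OF endpoints_in_cone(2)]] add [OF h scale [OF endpoints_in_cone(1)]]
    by (simp_all add: algebra_simps)
  moreover have "0 < a + (b + c)" "0 < (a + c) + b"
    unfolding c_def by linarith+
  ultimately show "0 \<le> a \<and> 0 \<le> b"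
    using coefficients_nonneg_of_sum_pos by blast
next
  assume "0 \<le> a \<and> 0 \<le> b"
  then show "a *\<^sub>R u + b *\<^sub>R v \<in> C"
    using blunt_convex_cone_nonneg_combination [OF cone endpoints_in_cone] nz by blast
qed

lemma endpoints_independent:
  assumes "a *\<^sub>R u + b *\<^sub>R v = 0"
  shows "a = 0 \<and> b = 0"
proof -
  have "b = 0"
  proof (rule ccontr)
    assume "b \<noteq> 0"
    have "b *\<^sub>R v = - (a *\<^sub>R u)"
      using assms by (simp add: add_eq_0_iff)
    then have "v = (- a / b) *\<^sub>R u"
      using \<open>b \<noteq> 0\<close> by (metis scaleR_scaleR scaleR_minus_left divide_inverse_commute scaleR_one divide_self_if)
    then have "u = (1 - a / b) *\<^sub>R u + (- 1) *\<^sub>R v"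
      by (simp add: algebra_simps)
    then show False
      using plane_mem_cone_iff [of "1 - a / b" "- 1"] endpoints_in_cone endpoints_nonzero by force
  qed
  then show ?thesis
    using assms endpoints_nonzero by simp
qed

lemma segment_meets_ray_once:
  assumes hC: "h \<in> C" and "h \<in> span {u, v}"
  shows "\<exists>p. closed_segment u v \<inter> span {h} = {p} \<and> p \<in> C"
proof -
  obtain a b where h: "h = a *\<^sub>R u + b *\<^sub>R v"
    using \<open>h \<in> span {u, v}\<close> by (auto simp: span_insert span_singleton diff_eq_eq add.commute)
  have "h \<noteq> 0"
    using cone hC unfolding blunt_convex_cone_def by auto
  then have ab: "0 \<le> a" "0 \<le> b"
    using plane_mem_cone_iff hC h by auto
  have pos: "0 < a + b"
    using ab h \<open>h \<noteq> 0\<close> by (cases "a = 0 \<and> b = 0") auto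
  define t where "t = b / (a + b)"
  define p where "p = (1 - t) *\<^sub>R u + t *\<^sub>R v"
  have "1 - t = a / (a + b)"
    using pos by (simp add: t_def field_simps)
  then have p_ray: "p = (1 / (a + b)) *\<^sub>R h"
    by (simp add: p_def t_def h scaleR_add_right)
  have "0 \<le> t" "t \<le> 1"
    using ab pos by (simp_all add: t_def field_simps)
  then have p_seg: "p \<in> closed_segment u v"
    unfolding p_def closed_segment_def by blast
  have unique: "q = p" if "q \<in> closed_segment u v" "q \<in> span {h}" for q
  proof -
    obtain s where s: "q = (1 - s) *\<^sub>R u + s *\<^sub>R v"
      using \<open>q \<in> closed_segment u v\<close> unfolding closed_segment_def by blast
    obtain k where k: "q = k *\<^sub>R h"
      using \<open>q \<in> span {h}\<close> by (auto simp: span_singleton)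
    have "((1 - s) - k * a) *\<^sub>R u + (s - k * b) *\<^sub>R v = 0"
      using s k h by (simp add: algebra_simps)
    then have "1 - s = k * a \<and> s = k * b"
      using endpoints_independent by fastforce
    then have "k = 1 / (a + b)"
      using pos by (simp add: field_simps)
    then show "q = p"
      using k p_ray by simp
  qed
  have "p \<in> span {h}"
    unfolding p_ray by (simp add: span_base span_scale)
  then have "closed_segment u v \<inter> span {h} = {p}"
    using p_seg unique by blast
  moreover have "p \<in> C"
    using p_seg line_inter_cone by blast
  ultimately show ?thesis
    by blast
qed

end

lemma lin_comb_eq_scaleR: "lin_comb a f b g = a *\<^sub>R f + b *\<^sub>R g"
  by (simp add: lin_comb_def fun_eq_iff)

lemma scal_eq_scaleR: "scal c f = c *\<^sub>R f"
  by (simp add: scal_def fun_eq_iff)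

lemma seg_eq_closed_segment: "seg u v = closed_segment u v"
  by (simp add: seg_def closed_segment_def lin_comb_eq_scaleR)

lemma vline_eq_span: "vline h = span {h}"
  by (auto simp: vline_def span_singleton scal_eq_scaleR)

lemma vplane_eq_span: "vplane u v = span {u, v}"
  by (auto simp: vplane_def span_insert span_singleton lin_comb_eq_scaleR algebra_simps)

lemma aff_line_eq_range: "aff_line f g = range (\<lambda>t. (1 - t) *\<^sub>R f + t *\<^sub>R g)"
  by (auto simp: aff_line_def lin_comb_eq_scaleR)

lemma affine_aff_line: "affine (aff_line f g)"
proof -
  have "aff_line f g = affine hull {f, g}"
  proof (rule set_eqI)
    fix w
    have "(\<exists>t. w = (1 - t) *\<^sub>R f + t *\<^sub>R g) \<longleftrightarrow> (\<exists>a b. w = a *\<^sub>R f + b *\<^sub>R g \<and> a + b = 1)"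
      by (metis add_diff_cancel_right' diff_add_cancel)
    then show "w \<in> aff_line f g \<longleftrightarrow> w \<in> affine hull {f, g}"
      unfolding aff_line_eq_range affine_hull_2 by auto
  qed
  then show ?thesis
    by simp
qed

lemma is_subspace_combination:
  assumes "is_subspace E" "f \<in> E" "g \<in> E"
  shows "a *\<^sub>R f + b *\<^sub>R g \<in> E"
proof -
  have "a *\<^sub>R f \<in> E" "b *\<^sub>R g \<in> E"
    using assms unfolding is_subspace_def scal_eq_scaleR by simp_all
  then have "(\<lambda>x. (a *\<^sub>R f) x + (b *\<^sub>R g) x) \<in> E"
    using assms(1) unfolding is_subspace_def by blast
  then show ?thesis
    by (simp add: plus_fun_def)
qed

lemma blunt_convex_cone_cone_C:
  assumes "is_subspace E"
  shows "blunt_convex_cone (cone_C E)"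
  unfolding blunt_convex_cone_def
proof (intro conjI ballI allI impI)
  show "0 \<notin> cone_C E"
    by (simp add: cone_C_def zero_fun_def)
next
  fix f g assume f: "f \<in> cone_C E" and g: "g \<in> cone_C E"
  have "f + g \<in> E"
    using is_subspace_combination [OF assms, of f g 1 1] f g by (simp add: cone_C_def)
  moreover have "\<forall>x. 0 \<le> (f + g) x"
    using f g by (simp add: cone_C_def)
  moreover have "f + g \<noteq> (\<lambda>x. 0)"
  proof
    assume "f + g = (\<lambda>x. 0)"
    then have "f x + g x = 0" for x
      by (metis plus_fun_apply)
    moreover have "0 \<le> f x" "0 \<le> g x" for x
      using f g by (simp_all add: cone_C_def)
    ultimately have "f = (\<lambda>x. 0)"
      by (simp add: fun_eq_iff add_nonneg_eq_0_iff)
    then show False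
      using f by (simp add: cone_C_def)
  qed
  ultimately show "f + g \<in> cone_C E"
    by (simp add: cone_C_def)
next
  fix c :: real and f assume "0 < c" "f \<in> cone_C E"
  moreover have "c *\<^sub>R f \<in> E"
    using is_subspace_combination [OF assms, of f f c 0] \<open>f \<in> cone_C E\<close> by (simp add: cone_C_def)
  ultimately show "c *\<^sub>R f \<in> cone_C E"
    by (auto simp: cone_C_def fun_eq_iff)
qed

lemma nonneg_parameters_interval:
  fixes f g :: "'x \<Rightarrow> real"
  assumes f: "\<forall>x. 0 \<le> f x" and g: "\<forall>x. 0 \<le> g x"
    and x0: "f x0 < g x0" and y0: "g y0 < f y0"
  shows "\<exists>t1 t2. t1 \<le> 0 \<and> 1 \<le> t2 \<and> {t. \<forall>x. 0 \<le> (1 - t) * f x + t * g x} = {t1..t2}"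
proof -
  define T where "T = {t. \<forall>x. 0 \<le> (1 - t) * f x + t * g x}"
  have "convex T"
    unfolding convex_def
  proof (intro ballI allI impI)
    fix s t a b :: real assume "s \<in> T" "t \<in> T" "0 \<le> a" "0 \<le> b" "a + b = 1"
    then have b: "b = 1 - a"
      by simp
    have "(1 - (a * s + b * t)) * f x + (a * s + b * t) * g x
        = a * ((1 - s) * f x + s * g x) + b * ((1 - t) * f x + t * g x)" for x
      unfolding b by (simp add: algebra_simps)
    then show "a *\<^sub>R s + b *\<^sub>R t \<in> T"
      using \<open>s \<in> T\<close> \<open>t \<in> T\<close> \<open>0 \<le> a\<close> \<open>0 \<le> b\<close> by (simp add: T_def)
  qed
  moreover have "closed T"
    unfolding T_def by (intro closed_Collect_all closed_Collect_le continuous_intros)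
  moreover have "T \<subseteq> {- f x0 / (g x0 - f x0) .. f y0 / (f y0 - g y0)}"
  proof
    fix t assume "t \<in> T"
    then have "0 \<le> f x0 + t * (g x0 - f x0)" "0 \<le> f y0 - t * (f y0 - g y0)"
      by (simp_all add: T_def algebra_simps)
    then show "t \<in> {- f x0 / (g x0 - f x0) .. f y0 / (f y0 - g y0)}"
      using x0 y0 by (simp add: field_simps)
  qed
  ultimately have "connected T \<and> compact T"
    by (meson bounded_closed_interval bounded_subset compact_eq_bounded_closed convex_connected)
  then obtain t1 t2 where T: "T = {t1..t2}"
    using connected_compact_interval_1 by blast
  have "0 \<in> T" "1 \<in> T"
    using f g by (simp_all add: T_def)
  then show ?thesis
    unfolding T_def [symmetric] T by auto
qed

lemma affine_combination_nonzero:
  fixes f g :: "'x \<Rightarrow> real"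
  assumes f: "\<forall>x. 0 \<le> f x" and g: "\<forall>x. 0 \<le> g x"
    and x0: "f x0 < g x0" and y0: "g y0 < f y0"
  shows "(1 - t) *\<^sub>R f + t *\<^sub>R g \<noteq> 0"
proof
  assume "(1 - t) *\<^sub>R f + t *\<^sub>R g = 0"
  from fun_cong [OF this] have zero: "f x + t * (g x - f x) = 0" for x
    by (simp add: algebra_simps)
  have "t * (g x0 - f x0) \<le> 0"
    using zero [of x0] f [rule_format, of x0] by linarith
  then have "t \<le> 0"
    using x0 by (simp add: mult_le_0_iff)
  have "t * (f y0 - g y0) = f y0"
    using zero [of y0] by (simp add: algebra_simps)
  then have "0 < t * (f y0 - g y0)"
    using g [rule_format, of y0] y0 by linarith
  then show False
    using \<open>t \<le> 0\<close> y0 by (simp add: zero_less_mult_iff)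
qed

lemma aff_line_inter_cone_C_is_segment:
  assumes E: "is_subspace E" and "f \<in> E" "g \<in> E"
    and f: "\<forall>x. 0 \<le> f x" and g: "\<forall>x. 0 \<le> g x"
    and x0: "f x0 < g x0" and y0: "g y0 < f y0"
  shows "\<exists>u v. aff_line f g \<inter> cone_C E = seg u v \<and> u \<noteq> v"
proof -
  define P where "P t = (1 - t) *\<^sub>R f + t *\<^sub>R g" for t
  obtain t1 t2 where t12: "t1 \<le> 0" "1 \<le> t2"
    and T: "{t. \<forall>x. 0 \<le> (1 - t) * f x + t * g x} = {t1..t2}"
    using nonneg_parameters_interval [OF f g x0 y0] by blast
  have "P t \<in> cone_C E \<longleftrightarrow> t \<in> {t1..t2}" for t
    using is_subspace_combination [OF E \<open>f \<in> E\<close> \<open>g \<in> E\<close>]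
      affine_combination_nonzero [OF f g x0 y0, of t]
    unfolding T [symmetric] by (simp add: P_def cone_C_def zero_fun_def)
  then have "aff_line f g \<inter> cone_C E = P ` {t1..t2}"
    unfolding aff_line_eq_range P_def [symmetric] by blast
  also have "\<dots> = seg (P t1) (P t2)"
    using t12 unfolding P_def seg_eq_closed_segment by (simp add: affine_path_image_interval)
  finally have "aff_line f g \<inter> cone_C E = seg (P t1) (P t2)" .
  moreover have "P t1 \<noteq> P t2"
  proof
    assume "P t1 = P t2"
    from fun_cong [OF this, of x0] have "(t2 - t1) * (g x0 - f x0) = 0"
      by (simp add: P_def algebra_simps)
    then show False
      using t12 x0 by simp
  qed
  ultimately show ?thesis
    by blast
qed

lemma nonneg_not_proportional_imp_cross_lt:
  fixes f g :: "'x \<Rightarrow> real"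
  assumes f: "\<forall>x. 0 \<le> f x" and g: "\<forall>x. 0 \<le> g x"
    and "f \<noteq> 0" "g \<noteq> 0" and not_prop: "\<forall>c>0. f \<noteq> c *\<^sub>R g"
  shows "\<exists>x y. f x * g y < f y * g x"
proof (rule ccontr)
  assume "\<not> ?thesis"
  then have "f y * g x \<le> f x * g y" for x y
    by (simp add: not_less)
  then have cross: "f y * g x0 = f x0 * g y" for x0 y
    by (meson order_antisym)
  obtain x0 where "g x0 \<noteq> 0"
    using \<open>g \<noteq> 0\<close> by (auto simp: fun_eq_iff)
  then have "0 < g x0"
    using g by (simp add: order_less_le)
  define c where "c = f x0 / g x0"
  have "f y = c * g y" for y
    using cross [of y x0] \<open>0 < g x0\<close> by (simp add: c_def field_simps)
  then have f_eq: "f = c *\<^sub>R g"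
    by (simp add: fun_eq_iff)
  have "0 \<le> c"
    using f \<open>0 < g x0\<close> by (simp add: c_def)
  moreover have "c \<noteq> 0"
    using \<open>f \<noteq> 0\<close> f_eq by auto
  ultimately have "0 < c"
    by simp
  then show False
    using not_prop f_eq by blast
qed

lemma cross_lt_imp_scaled_sign_change:
  fixes f g :: "'x \<Rightarrow> real"
  assumes f: "\<forall>x. 0 \<le> f x" and g: "\<forall>x. 0 \<le> g x"
    and cross: "f x * g y < f y * g x"
  shows "\<exists>b>0. f x < b * g x \<and> b * g y < f y"
proof -
  have "0 \<le> f x * g y"
    using f g by simp
  then have "0 < f y * g x"
    using cross by linarith
  then have "0 < g x"
    using f [rule_format, of y] by (simp add: zero_less_mult_iff)
  define \<delta> where "\<delta> = f y - f x * g y / g x"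
  have "0 < \<delta>"
    using cross \<open>0 < g x\<close> by (simp add: \<delta>_def field_simps)
  \<comment> \<open>Any slope in \<open>]f x / g x, f y / g y[\<close> works; this one avoids dividing by \<open>g y\<close>, which may vanish.\<close>
  define b where "b = f x / g x + \<delta> / (g y + 1)"
  have gy: "0 \<le> g y"
    using g by simp
  have "0 < b"
    using f \<open>0 < g x\<close> \<open>0 < \<delta>\<close> gy by (simp add: b_def add_nonneg_pos)
  moreover have "b * g x = f x + \<delta> * g x / (g y + 1)"
    using \<open>0 < g x\<close> by (simp add: b_def distrib_right)
  then have "f x < b * g x"
    using \<open>0 < g x\<close> \<open>0 < \<delta>\<close> gy by simp
  moreover have "b * g y = f x * g y / g x + \<delta> * (g y / (g y + 1))"
    by (simp add: b_def distrib_right)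
  moreover have "\<delta> * (g y / (g y + 1)) < \<delta>"
    using \<open>0 < \<delta>\<close> gy by (simp add: field_simps)
  moreover have "f x * g y / g x + \<delta> = f y"
    by (simp add: \<delta>_def)
  ultimately have "0 < b \<and> f x < b * g x \<and> b * g y < f y"
    by linarith
  then show ?thesis
    by blast
qed

lemma halfline_scaleR:
  assumes "0 < c"
  shows "halfline (c *\<^sub>R f) = halfline f"
proof (intro set_eqI iffI)
  fix w assume "w \<in> halfline (c *\<^sub>R f)"
  then obtain b where "0 < b" "w = scal b (c *\<^sub>R f)"
    unfolding halfline_def by blast
  then have "w = scal (b * c) f" "0 < b * c"
    using assms by (simp_all add: scal_eq_scaleR)
  then show "w \<in> halfline f"
    unfolding halfline_def by blast
next
  fix w assume "w \<in> halfline f"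
  then obtain b where "0 < b" "w = scal b f"
    unfolding halfline_def by blast
  then have "w = scal (b / c) (c *\<^sub>R f)" "0 < b / c"
    using assms by (simp_all add: scal_eq_scaleR)
  then show "w \<in> halfline (c *\<^sub>R f)"
    unfolding halfline_def by blast
qed

lemma self_mem_halfline: "f \<in> halfline f"
proof -
  have "f = scal 1 f \<and> (0::real) < 1"
    by (simp add: scal_eq_scaleR)
  then show ?thesis
    unfolding halfline_def by (intro CollectI exI)
qed

lemma Pi_C_exists_segment:
  assumes E: "is_subspace E" and "F \<in> Pi_C E" "G \<in> Pi_C E" "F \<noteq> G"
  shows "\<exists>f g u v. f \<in> F \<and> g \<in> G \<and> aff_line f g \<inter> cone_C E = seg u v \<and> u \<noteq> v"
proof -
  obtain f g where f: "f \<in> cone_C E" "F = halfline f" and g: "g \<in> cone_C E" "G = halfline g"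
    using assms(2,3) unfolding Pi_C_def by blast
  then have "f \<in> E" "g \<in> E" and nonneg: "\<forall>x. 0 \<le> f x" "\<forall>x. 0 \<le> g x"
    and "f \<noteq> 0" "g \<noteq> 0"
    by (simp_all add: cone_C_def zero_fun_def)
  have "\<forall>c>0. f \<noteq> c *\<^sub>R g"
  proof (intro allI impI notI)
    fix c :: real assume "0 < c" "f = c *\<^sub>R g"
    then have "F = G"
      using f(2) g(2) halfline_scaleR by simp
    with \<open>F \<noteq> G\<close> show False ..
  qed
  then obtain x y where "f x * g y < f y * g x"
    using nonneg_not_proportional_imp_cross_lt [OF nonneg \<open>f \<noteq> 0\<close> \<open>g \<noteq> 0\<close>] by blast
  then obtain b where b: "0 < b" "f x < b * g x" "b * g y < f y"
    using cross_lt_imp_scaled_sign_change [OF nonneg] by blast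
  define g' where "g' = b *\<^sub>R g"
  have "g' \<in> E"
    using is_subspace_combination [OF E \<open>g \<in> E\<close> \<open>g \<in> E\<close>, of b 0] by (simp add: g'_def)
  moreover have "\<forall>x. 0 \<le> g' x" "f x < g' x" "g' y < f y"
    using nonneg(2) b by (simp_all add: g'_def)
  ultimately have "\<exists>u v. aff_line f g' \<inter> cone_C E = seg u v \<and> u \<noteq> v"
    by (rule aff_line_inter_cone_C_is_segment [OF E \<open>f \<in> E\<close> _ nonneg(1)])
  moreover have "f \<in> F"
    using f(2) self_mem_halfline by simp
  moreover have "g' \<in> G"
    using g(2) halfline_scaleR [OF \<open>0 < b\<close>, of g] self_mem_halfline [of g'] by (simp add: g'_def)
  ultimately show ?thesis
    by blast
qed

lemma cone_C_section_properties:
  assumes E: "is_subspace E" and inter_eq: "aff_line f g \<inter> cone_C E = seg u v" and "u \<noteq> v"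
  shows "(\<forall>h \<in> cone_C E. h \<in> vplane u v \<longrightarrow> (\<exists>p. seg u v \<inter> vline h = {p} \<and> p \<in> cone_C E))
    \<and> (\<forall>h h1 h2. h \<noteq> (\<lambda>x. 0) \<and> h = lin_comb h1 u h2 v \<longrightarrow>
         (h \<in> cone_C E \<longleftrightarrow> 0 \<le> h1 \<and> 0 \<le> h2))"
proof -
  interpret cone_section "cone_C E" "aff_line f g" u v
    using blunt_convex_cone_cone_C [OF E] affine_aff_line inter_eq \<open>u \<noteq> v\<close>
    by unfold_locales (simp_all add: seg_eq_closed_segment)
  have "\<exists>p. seg u v \<inter> vline h = {p} \<and> p \<in> cone_C E"
    if "h \<in> cone_C E" "h \<in> vplane u v" for h
    using segment_meets_ray_once that unfolding seg_eq_closed_segment vline_eq_span vplane_eq_span .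
  moreover have "h \<in> cone_C E \<longleftrightarrow> 0 \<le> h1 \<and> 0 \<le> h2"
    if "h \<noteq> 0" "h = h1 *\<^sub>R u + h2 *\<^sub>R v" for h h1 h2
    using that(1) unfolding that(2) by (rule plane_mem_cone_iff)
  ultimately show ?thesis
    by (simp add: lin_comb_eq_scaleR zero_fun_def)
qed

theorem mainTheorem3:
  fixes E :: "('x \<Rightarrow> real) set" and F G :: "('x \<Rightarrow> real) set"
  assumes "is_subspace E"
    and "F \<in> Pi_C E" and "G \<in> Pi_C E" and "F \<noteq> G"
  shows "(\<exists>f g u v. f \<in> F \<and> g \<in> G \<and> aff_line f g \<inter> cone_C E = seg u v \<and> u \<noteq> v)
    \<and> (\<forall>f g u v. f \<in> F \<and> g \<in> G \<and> aff_line f g \<inter> cone_C E = seg u v \<and> u \<noteq> v \<longrightarrow>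
         (\<forall>h \<in> cone_C E. h \<in> vplane u v \<longrightarrow>
             (\<exists>p. seg u v \<inter> vline h = {p} \<and> p \<in> cone_C E))
       \<and> (\<forall>h h1 h2. h \<noteq> (\<lambda>x. 0) \<and> h = lin_comb h1 u h2 v \<longrightarrow>
             (h \<in> cone_C E \<longleftrightarrow> 0 \<le> h1 \<and> 0 \<le> h2)))"
  using Pi_C_exists_segment [OF assms] cone_C_section_properties [OF assms(1)] by blast

end
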